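(* Let $F:\mathcal{P}(V,A)\to S_2(A)$ be an irreducible, weakly viable consular election rule satisfying SPP and SPO. Then every vertex of the range graph $\mathcal{G}(F)$ belongs to a $3$-cycle.
   Context: $V$ is a finite nonempty set of voters, $A$ a finite set of alternatives; a profile $P$ assigns to each voter $i$ a linear order $P_i$ on $A$; $P_i'P_{-i}$ replaces voter $i$'s order by $P_i'$; $P|_B$ is the profile of restrictions to $B\subseteq A$. $S_2(A)$ is the set of 2-element subsets of $A$; a consular election rule is a map $F:\mathcal{P}(V,A)\to S_2(A)$. SPO: for all $P$, $i$, $P_i'$, $\mathrm{best}(P_i,F(P))\succeq_i\mathrm{best}(P_i,F(P_i'P_{-i}))$; SPP: same with $\mathrm{worst}$, where $\mathrm{best}(P_i,W)$, $\mathrm{worst}(P_i,W)$ are the $P_i$-best and $P_i$-worst elements of $W$. Weakly viable: every $a\in A$ lies in $F(P)$ for some $P$. $F$ is reducible if there is a partition $A=B\uplus C$ and social choice functions $G:\mathcal{P}(V,B)\to B$, $H:\mathcal{P}(V,C)\to C$ with $F(P)=\{G(P|_B),H(P|_C)\}$ for all $P$; irreducible means not reducible. The range graph $\mathcal{G}(F)$ has vertex set $A$ and edge set equal to the range of $F$. *)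

theory Defs
  imports Main
begin

(* A preference (linear order) on A is a relation R with linear_order_on A R;
   (x, y) \<in> R means "x is weakly preferred to y". *)

definition profiles :: "'v set \<Rightarrow> 'a set \<Rightarrow> ('v \<Rightarrow> 'a rel) set" where
  "profiles V A = {P. (\<forall>i\<in>V. linear_order_on A (P i)) \<and> (\<forall>i. i \<notin> V \<longrightarrow> P i = {})}"

definition restrict_profile :: "('v \<Rightarrow> 'a rel) \<Rightarrow> 'a set \<Rightarrow> ('v \<Rightarrow> 'a rel)" where
  "restrict_profile P B = (\<lambda>i. P i \<inter> (B \<times> B))"

definition S2 :: "'a set \<Rightarrow> 'a set set" where
  "S2 A = {W. W \<subseteq> A \<and> card W = 2}"

definition consular_rule :: "'v set \<Rightarrow> 'a set \<Rightarrow> (('v \<Rightarrow> 'a rel) \<Rightarrow> 'a set) \<Rightarrow> bool" where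
  "consular_rule V A F \<longleftrightarrow> (\<forall>P\<in>profiles V A. F P \<in> S2 A)"

definition best :: "'a rel \<Rightarrow> 'a set \<Rightarrow> 'a" where
  "best R W = (THE x. x \<in> W \<and> (\<forall>y\<in>W. (x, y) \<in> R))"

definition worst :: "'a rel \<Rightarrow> 'a set \<Rightarrow> 'a" where
  "worst R W = (THE x. x \<in> W \<and> (\<forall>y\<in>W. (y, x) \<in> R))"

definition SPO :: "'v set \<Rightarrow> 'a set \<Rightarrow> (('v \<Rightarrow> 'a rel) \<Rightarrow> 'a set) \<Rightarrow> bool" where
  "SPO V A F \<longleftrightarrow> (\<forall>P\<in>profiles V A. \<forall>i\<in>V. \<forall>R. linear_order_on A R \<longrightarrow>
      (best (P i) (F P), best (P i) (F (P(i := R)))) \<in> P i)"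

definition SPP :: "'v set \<Rightarrow> 'a set \<Rightarrow> (('v \<Rightarrow> 'a rel) \<Rightarrow> 'a set) \<Rightarrow> bool" where
  "SPP V A F \<longleftrightarrow> (\<forall>P\<in>profiles V A. \<forall>i\<in>V. \<forall>R. linear_order_on A R \<longrightarrow>
      (worst (P i) (F P), worst (P i) (F (P(i := R)))) \<in> P i)"

definition weakly_viable :: "'v set \<Rightarrow> 'a set \<Rightarrow> (('v \<Rightarrow> 'a rel) \<Rightarrow> 'a set) \<Rightarrow> bool" where
  "weakly_viable V A F \<longleftrightarrow> (\<forall>a\<in>A. \<exists>P\<in>profiles V A. a \<in> F P)"

definition reducible :: "'v set \<Rightarrow> 'a set \<Rightarrow> (('v \<Rightarrow> 'a rel) \<Rightarrow> 'a set) \<Rightarrow> bool" where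
  "reducible V A F \<longleftrightarrow> (\<exists>B C G H. B \<union> C = A \<and> B \<inter> C = {} \<and>
      (\<forall>P\<in>profiles V B. G P \<in> B) \<and> (\<forall>P\<in>profiles V C. H P \<in> C) \<and>
      (\<forall>P\<in>profiles V A. F P = {G (restrict_profile P B), H (restrict_profile P C)}))"

definition irreducible :: "'v set \<Rightarrow> 'a set \<Rightarrow> (('v \<Rightarrow> 'a rel) \<Rightarrow> 'a set) \<Rightarrow> bool" where
  "irreducible V A F \<longleftrightarrow> \<not> reducible V A F"

(* edge set of the range graph G(F): the range of F on P(V,A); vertex set is A *)
definition range_edges :: "'v set \<Rightarrow> 'a set \<Rightarrow> (('v \<Rightarrow> 'a rel) \<Rightarrow> 'a set) \<Rightarrow> 'a set set" where
  "range_edges V A F = F ` profiles V A"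

end

theory Submission
  imports Defs
begin

(* Strategy-proofness for both the optimist (SPO) and the pessimist (SPP) makes the range of F
   "dominant": for every linear order R some elected pair has an R-best best element and an
   R-best worst element among all elected pairs (reached by letting all voters report R, one
   at a time).  In a dominant family of pairs, a member {w,z} and a member {u,v} avoiding w
   force {w,u} or {w,v} into the family: rank w, u, v on top.  If a lies on no triangle, this
   makes every range edge cross between the neighbourhood of a and its complement X.  Applying
   the dominance argument to the outcomes of a single voter then shows that the X-element of
   F P depends only on the restriction of P to X, and symmetrically for the other side, so F
   is reducible. *)

lemma linear_order_onD:
  assumes "linear_order_on A R"
  shows "R \<subseteq> A \<times> A" "\<And>x. x \<in> A \<Longrightarrow> (x, x) \<in> R"
    "\<And>x y z. (x, y) \<in> R \<Longrightarrow> (y, z) \<in> R \<Longrightarrow> (x, z) \<in> R"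
    "\<And>x y. (x, y) \<in> R \<Longrightarrow> (y, x) \<in> R \<Longrightarrow> x = y"
    "\<And>x y. x \<in> A \<Longrightarrow> y \<in> A \<Longrightarrow> (x, y) \<in> R \<or> (y, x) \<in> R"
proof -
  have R: "R \<subseteq> A \<times> A" "refl_on A R" "trans R" "antisym R" "total_on A R"
    using assms unfolding linear_order_on_def partial_order_on_def preorder_on_def by auto
  show "R \<subseteq> A \<times> A" by (fact R(1))
  show "\<And>x. x \<in> A \<Longrightarrow> (x, x) \<in> R" using R(2) unfolding refl_on_def by auto
  show "\<And>x y z. (x, y) \<in> R \<Longrightarrow> (y, z) \<in> R \<Longrightarrow> (x, z) \<in> R" using R(3) by (rule transD)
  show "\<And>x y. (x, y) \<in> R \<Longrightarrow> (y, x) \<in> R \<Longrightarrow> x = y" using R(4) by (rule antisymD)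
  show "\<And>x y. x \<in> A \<Longrightarrow> y \<in> A \<Longrightarrow> (x, y) \<in> R \<or> (y, x) \<in> R"
    using R(2,5) unfolding refl_on_def total_on_def by metis
qed

lemma best_worst_pair:
  assumes lin: "linear_order_on A R" and xy: "(x, y) \<in> R"
  shows "best R {x, y} = x" "worst R {x, y} = y"
proof -
  have xyA: "x \<in> A" "y \<in> A" using linear_order_onD(1)[OF lin] xy by auto
  show "best R {x, y} = x" unfolding best_def
    by (rule the_equality) (use xy xyA linear_order_onD(2,4)[OF lin] in auto)
  show "worst R {x, y} = y" unfolding worst_def
    by (rule the_equality) (use xy xyA linear_order_onD(2,4)[OF lin] in auto)
qed

lemma S2_pairD: "{u, v} \<in> S2 A \<Longrightarrow> u \<in> A \<and> v \<in> A \<and> u \<noteq> v"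
  unfolding S2_def by (cases "u = v") auto

lemma S2_best_worst:
  assumes lin: "linear_order_on A R" and W: "W \<in> S2 A"
  obtains p q where "W = {p, q}" "p \<noteq> q" "p \<in> A" "q \<in> A" "(p, q) \<in> R"
    "best R W = p" "worst R W = q"
proof -
  obtain x y where xy: "W = {x, y}" "x \<noteq> y" using W unfolding S2_def by (auto simp: card_2_iff)
  have A: "x \<in> A" "y \<in> A" using W xy unfolding S2_def by auto
  consider "(x, y) \<in> R" | "(y, x) \<in> R" using linear_order_onD(5)[OF lin A] by blast
  then show thesis
  proof cases
    case 1
    then show thesis using that best_worst_pair[OF lin 1] xy A by blast
  next
    case 2
    then show thesis using that[of y x] best_worst_pair[OF lin 2] xy A by (auto simp: insert_commute)
  qed
qed

lemma S2_best_worst_bounds: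
  assumes "linear_order_on A R" "W \<in> S2 A" "x \<in> W"
  shows "(best R W, x) \<in> R" "(x, worst R W) \<in> R"
proof -
  obtain p q where "W = {p, q}" "p \<in> A" "q \<in> A" "(p, q) \<in> R" "best R W = p" "worst R W = q"
    using S2_best_worst[OF assms(1,2)] by blast
  then show "(best R W, x) \<in> R" "(x, worst R W) \<in> R"
    using assms(3) linear_order_onD(2)[OF assms(1)] by auto
qed

lemma linear_order_with_top_three:
  assumes fin: "finite A" and A: "w \<in> A" "u \<in> A" "v \<in> A" and d: "w \<noteq> u" "w \<noteq> v" "u \<noteq> v"
  shows "\<exists>R. linear_order_on A R \<and> (\<forall>x\<in>A. (w, x) \<in> R) \<and> (u, v) \<in> R \<and>
           (\<forall>t. (t, v) \<in> R \<longrightarrow> t = w \<or> t = u \<or> t = v)"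
proof -
  obtain h n where h: "h ` A = {i::nat. i < n}" "inj_on h A"
    using finite_imp_inj_to_nat_seg[OF fin] by blast
  have hlt: "\<And>x. x \<in> A \<Longrightarrow> h x < n" using h(1) by auto
  define f where "f x = (if x = w then n + 3 else if x = u then n + 2 else if x = v then n + 1 else h x)"
    for x
  define R where "R = {(x, y). x \<in> A \<and> y \<in> A \<and> f y \<le> f x}"
  have "inj_on f A"
  proof (rule inj_onI)
    fix x y assume "x \<in> A" "y \<in> A" "f x = f y"
    then show "x = y" using hlt[of x] hlt[of y] d h(2) unfolding f_def inj_on_def
      by (auto split: if_splits)
  qed
  then have "linear_order_on A R"
    unfolding R_def linear_order_on_def partial_order_on_def preorder_on_def refl_on_def
      trans_def antisym_def total_on_def inj_on_def
    by (auto intro: le_antisym)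
  moreover have "(w, x) \<in> R" if "x \<in> A" for x using that A hlt[of x] unfolding R_def f_def by auto
  moreover have "(u, v) \<in> R" using A d unfolding R_def f_def by auto
  moreover have "(t, v) \<in> R \<Longrightarrow> t = w \<or> t = u \<or> t = v" for t
    using hlt[of t] d unfolding R_def f_def by (auto split: if_splits)
  ultimately show ?thesis by blast
qed

definition dominates :: "'a rel \<Rightarrow> 'a set \<Rightarrow> 'a set \<Rightarrow> bool" where
  "dominates R W W' \<longleftrightarrow> (best R W, best R W') \<in> R \<and> (worst R W, worst R W') \<in> R"

definition has_dominant_member :: "'a set \<Rightarrow> 'a set set \<Rightarrow> bool" where
  "has_dominant_member A Os \<longleftrightarrow>
     (\<forall>R. linear_order_on A R \<longrightarrow> (\<exists>W0\<in>Os. \<forall>W\<in>Os. dominates R W0 W))"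

definition crossing :: "'a set set \<Rightarrow> 'a set \<Rightarrow> 'a set \<Rightarrow> bool" where
  "crossing Os X Y \<longleftrightarrow> (\<forall>W\<in>Os. \<exists>x\<in>X. \<exists>y\<in>Y. W = {x, y})"

lemma dominates_refl: "linear_order_on A R \<Longrightarrow> W \<in> S2 A \<Longrightarrow> dominates R W W"
  unfolding dominates_def by (metis S2_best_worst linear_order_onD(2))

lemma dominates_trans:
  "linear_order_on A R \<Longrightarrow> dominates R W1 W2 \<Longrightarrow> dominates R W2 W3 \<Longrightarrow> dominates R W1 W3"
  unfolding dominates_def by (meson linear_order_onD(3))

lemma has_dominant_member_link:
  assumes fin: "finite A" and Os: "Os \<subseteq> S2 A" and dom: "has_dominant_member A Os"
    and uv: "{u, v} \<in> Os" and wz: "{w, z} \<in> Os" and d: "w \<noteq> u" "w \<noteq> v"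
  shows "{w, u} \<in> Os \<or> {w, v} \<in> Os"
proof -
  have uvA: "u \<in> A" "v \<in> A" "u \<noteq> v" and wzA: "w \<in> A" "z \<in> A"
    using S2_pairD[of u v A] S2_pairD[of w z A] Os uv wz by auto
  obtain R where lin: "linear_order_on A R" and top: "\<forall>x\<in>A. (w, x) \<in> R" and "(u, v) \<in> R"
    and low: "\<forall>t. (t, v) \<in> R \<longrightarrow> t = w \<or> t = u \<or> t = v"
    using linear_order_with_top_three[OF fin wzA(1) uvA(1,2) d uvA(3)] by blast
  then have best_wz: "best R {w, z} = w" and worst_uv: "worst R {u, v} = v"
    using best_worst_pair[OF lin] wzA by auto
  obtain W0 where W0: "W0 \<in> Os" "\<forall>W\<in>Os. dominates R W0 W"
    using dom lin unfolding has_dominant_member_def by blast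
  obtain p q where pq: "W0 = {p, q}" "p \<noteq> q" "p \<in> A" "best R W0 = p" "worst R W0 = q"
    using S2_best_worst[OF lin] W0(1) Os by blast
  have "dominates R W0 {w, z}" "dominates R W0 {u, v}" using W0(2) wz uv by blast+
  then have "(p, w) \<in> R" "(q, v) \<in> R" unfolding dominates_def pq(4,5) best_wz worst_uv by blast+
  then have "p = w" "q = u \<or> q = v"
    using linear_order_onD(4)[OF lin] top pq(2,3) low by blast+
  then show ?thesis using W0(1) pq(1) by blast
qed

lemma crossing_partner:
  assumes "crossing Os X Y" "X \<inter> Y = {}" "W \<in> Os" "x \<in> W" "x \<in> X"
  shows "\<exists>y\<in>Y. W = {x, y}"
proof -
  obtain a b where ab: "a \<in> X" "b \<in> Y" "W = {a, b}" using assms(1,3) unfolding crossing_def by blast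
  have "x \<noteq> b" using assms(2,5) ab(2) by blast
  then have "x = a" using assms(4) ab(3) by blast
  then show ?thesis using ab by blast
qed

lemma crossing_not_same_side:
  assumes "crossing Os X Y" "X \<inter> Y = {}" "u \<in> Y" "v \<in> Y"
  shows "{u, v} \<notin> Os"
proof
  assume "{u, v} \<in> Os"
  then obtain a b where "a \<in> X" "{u, v} = {a, b}" using assms(1) unfolding crossing_def by blast
  then have "a = u \<or> a = v" by blast
  then show False using \<open>a \<in> X\<close> assms(2-4) by blast
qed

lemma crossing_dominant_side_max:
  assumes fin: "finite A" and Os: "Os \<subseteq> S2 A" and dom: "has_dominant_member A Os"
    and cross: "crossing Os X Y" and disj: "X \<inter> Y = {}" and lin: "linear_order_on A R"
    and W0: "W0 \<in> Os" "\<forall>W\<in>Os. dominates R W0 W" and x0: "x0 \<in> W0" "x0 \<in> X"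
    and W: "W \<in> Os" "x \<in> W" "x \<in> X"
  shows "(x0, x) \<in> R"
proof -
  obtain y0 where y0: "y0 \<in> Y" "W0 = {x0, y0}" using crossing_partner[OF cross disj W0(1) x0] by blast
  obtain y where y: "y \<in> Y" "W = {x, y}" using crossing_partner[OF cross disj W] by blast
  have "(best R W0, best R W) \<in> R" using W0(2) W(1) unfolding dominates_def by blast
  then have best_x: "(best R W0, x) \<in> R"
    using S2_best_worst_bounds(1)[OF lin _ W(2)] Os W(1) linear_order_onD(3)[OF lin] by blast
  obtain p q where pq: "W0 = {p, q}" "p \<noteq> q" "best R W0 = p" "worst R W0 = q"
    using S2_best_worst[OF lin] W0(1) Os by blast
  consider "p = x0" | "p = y0" "q = x0" using pq(1,2) y0(2) by (auto simp: doubleton_eq_iff)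
  then show ?thesis
  proof cases
    case 1
    then show ?thesis using best_x pq(3) by simp
  next
    case 2
    have "{y0, x} \<in> Os"
    proof (cases "y = y0")
      case True
      then show ?thesis using W y(2) by (simp add: insert_commute)
    next
      case False
      have "{y0, y} \<notin> Os" using crossing_not_same_side[OF cross disj y0(1) y(1)] .
      moreover have "y0 \<noteq> x" using y0(1) W(3) disj by blast
      moreover have "{y0, x0} \<in> Os" using W0(1) y0(2) by (simp add: insert_commute)
      ultimately show ?thesis
        using has_dominant_member_link[OF fin Os dom, of x y y0 x0] W(1) y(2) False by blast
    qed
    moreover have "worst R {y0, x} = x" using best_worst_pair[OF lin] best_x pq(3) 2 by simp
    ultimately show ?thesis using W0(2) pq(4) 2 unfolding dominates_def by fastforce
  qed
qed

lemma crossing_of_no_triangle: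
  assumes fin: "finite A" and Os: "Os \<subseteq> S2 A" and dom: "has_dominant_member A Os"
    and az: "{a, z} \<in> Os"
    and no_tri: "\<not> (\<exists>b c. {a, b} \<in> Os \<and> {b, c} \<in> Os \<and> {a, c} \<in> Os)"
  shows "crossing Os (A - {y. {a, y} \<in> Os}) {y. {a, y} \<in> Os}"
  unfolding crossing_def
proof
  let ?N = "{y. {a, y} \<in> Os}"
  fix W assume W: "W \<in> Os"
  then obtain p q where pq: "W = {p, q}" "p \<noteq> q" "p \<in> A" "q \<in> A"
    using Os unfolding S2_def by (auto simp: card_2_iff)
  have "\<not> (p \<in> ?N \<and> q \<in> ?N)" using no_tri W pq(1) by blast
  moreover have "\<not> (p \<notin> ?N \<and> q \<notin> ?N)"
  proof
    assume out: "p \<notin> ?N \<and> q \<notin> ?N"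
    then have "a \<noteq> p" "a \<noteq> q" using W pq(1) by (auto simp: insert_commute)
    then show False using has_dominant_member_link[OF fin Os dom, of p q a z] W pq(1) az out by blast
  qed
  ultimately consider "p \<in> A - ?N" "q \<in> ?N" | "q \<in> A - ?N" "p \<in> ?N" using pq(3,4) by blast
  then show "\<exists>x\<in>A - ?N. \<exists>y\<in>?N. W = {x, y}"
  proof cases
    case 1
    then show ?thesis using pq(1) by blast
  next
    case 2
    then show ?thesis using pq(1) insert_commute[of p q "{}"] by blast
  qed
qed

lemma profiles_linear: "Q \<in> profiles V A \<Longrightarrow> i \<in> V \<Longrightarrow> linear_order_on A (Q i)"
  unfolding profiles_def by blast

lemma profiles_outside: "Q \<in> profiles V A \<Longrightarrow> i \<notin> V \<Longrightarrow> Q i = {}"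
  unfolding profiles_def by blast

lemma profiles_fun_upd:
  "Q \<in> profiles V A \<Longrightarrow> i \<in> V \<Longrightarrow> linear_order_on A R \<Longrightarrow> Q(i := R) \<in> profiles V A"
  unfolding profiles_def by auto

lemma consular_rule_S2: "consular_rule V A F \<Longrightarrow> P \<in> profiles V A \<Longrightarrow> F P \<in> S2 A"
  unfolding consular_rule_def by blast

lemma range_edges_S2: "consular_rule V A F \<Longrightarrow> range_edges V A F \<subseteq> S2 A"
  unfolding consular_rule_def range_edges_def by blast

lemma weakly_viable_range_edge:
  assumes cons: "consular_rule V A F" and "weakly_viable V A F" "a \<in> A"
  obtains z where "{a, z} \<in> range_edges V A F"
proof -
  obtain P where P: "P \<in> profiles V A" "a \<in> F P" using assms(2,3) unfolding weakly_viable_def by blast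
  then obtain p q where "F P = {p, q}"
    using consular_rule_S2[OF cons P(1)] unfolding S2_def by (auto simp: card_2_iff)
  then obtain z where "F P = {a, z}" using P(2) by (auto simp: insert_commute)
  then show thesis using that P(1) unfolding range_edges_def by (metis image_eqI)
qed

lemma SPO_SPP_dominates:
  "SPO V A F \<Longrightarrow> SPP V A F \<Longrightarrow> P \<in> profiles V A \<Longrightarrow> i \<in> V \<Longrightarrow> linear_order_on A R \<Longrightarrow>
    dominates (P i) (F P) (F (P(i := R)))"
  unfolding SPO_def SPP_def dominates_def by blast

lemma profiles_voterwise_chain:
  assumes finV: "finite V" and P: "P \<in> profiles V A" and P': "P' \<in> profiles V A"
    and base: "r P P" and trans: "\<And>Q1 Q2 Q3. r Q1 Q2 \<Longrightarrow> r Q2 Q3 \<Longrightarrow> r Q1 Q3"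
    and step: "\<And>Q i. Q \<in> profiles V A \<Longrightarrow> i \<in> V \<Longrightarrow> Q i = P i \<Longrightarrow> r (Q(i := P' i)) Q"
  shows "r P' P"
proof -
  define mix where "mix S = (\<lambda>j. if j \<in> S then P' j else P j)" for S
  have "r (mix S) P" if "S \<subseteq> V" for S
    using finite_subset[OF that finV] that
  proof (induction S rule: finite_subset_induct')
    case empty
    show ?case using base unfolding mix_def by simp
  next
    case (insert i S)
    have "mix S \<in> profiles V A"
      using insert.hyps(3) P P' unfolding profiles_def mix_def by auto
    moreover have "mix S i = P i" "(mix S)(i := P' i) = mix (insert i S)"
      using insert.hyps(4) unfolding mix_def by (auto simp: fun_eq_iff)
    ultimately show ?case using step[of "mix S" i] insert.hyps(2) insert.IH trans by metis
  qed
  moreover have "mix V = P'"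
    using profiles_outside[OF P] profiles_outside[OF P'] unfolding mix_def by (auto simp: fun_eq_iff)
  ultimately show ?thesis by blast
qed

lemma range_edges_has_dominant_member:
  assumes finV: "finite V" and cons: "consular_rule V A F" and spo: "SPO V A F" and spp: "SPP V A F"
  shows "has_dominant_member A (range_edges V A F)"
  unfolding has_dominant_member_def range_edges_def
proof (intro allI impI)
  fix R assume lin: "linear_order_on A R"
  define U where "U = (\<lambda>i. if i \<in> V then R else {})"
  have U: "U \<in> profiles V A" unfolding profiles_def U_def using lin by auto
  have "dominates R (F U) (F Q)" if Q: "Q \<in> profiles V A" for Q
  proof (rule profiles_voterwise_chain[OF finV Q U, where r = "\<lambda>Q1 Q2. dominates R (F Q1) (F Q2)"])
    show "dominates R (F Q) (F Q)" using dominates_refl[OF lin consular_rule_S2[OF cons Q]] .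
    show "dominates R (F Q1) (F Q3)" if "dominates R (F Q1) (F Q2)" "dominates R (F Q2) (F Q3)"
      for Q1 Q2 Q3
      using dominates_trans[OF lin that] .
    fix Q' i assume Q': "Q' \<in> profiles V A" and i: "i \<in> V"
    have "dominates R (F (Q'(i := R))) (F ((Q'(i := R))(i := Q' i)))"
      using SPO_SPP_dominates[OF spo spp profiles_fun_upd[OF Q' i lin] i profiles_linear[OF Q' i]]
      by simp
    then show "dominates R (F (Q'(i := U i))) (F Q')" using i unfolding U_def by simp
  qed
  then show "\<exists>W0\<in>F ` profiles V A. \<forall>W\<in>F ` profiles V A. dominates R W0 W" using U by blast
qed

lemma crossing_range_edgesE:
  assumes "crossing (range_edges V A F) X Y" "P \<in> profiles V A"
  obtains x y where "x \<in> X" "y \<in> Y" "F P = {x, y}"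
proof -
  have "F P \<in> range_edges V A F" unfolding range_edges_def using assms(2) by (rule imageI)
  with assms(1) have "\<exists>x\<in>X. \<exists>y\<in>Y. F P = {x, y}" unfolding crossing_def by (rule bspec)
  then show thesis using that by blast
qed

lemma the_elem_pair_Int: "x \<in> X \<Longrightarrow> y \<notin> X \<Longrightarrow> the_elem ({x, y} \<inter> X) = x"
  by (subgoal_tac "{x, y} \<inter> X = {x}") auto

(* The outcomes obtainable by voter i alone form a dominant family, so the X-element elected
   when i reports R is the R-best X-element i can obtain; hence it only depends on R on X. *)

lemma crossing_side_fun_upd:
  assumes finA: "finite A" and cons: "consular_rule V A F" and spo: "SPO V A F" and spp: "SPP V A F"
    and disj: "X \<inter> Y = {}" and cross: "crossing (range_edges V A F) X Y"
    and Q: "Q \<in> profiles V A" and i: "i \<in> V" and lin': "linear_order_on A R'"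
    and agree: "R' \<inter> X \<times> X = Q i \<inter> X \<times> X"
  shows "the_elem (F (Q(i := R')) \<inter> X) = the_elem (F Q \<inter> X)"
proof -
  define Os where "Os = (\<lambda>R. F (Q(i := R))) ` {R. linear_order_on A R}"
  have "Os \<subseteq> range_edges V A F"
    unfolding Os_def range_edges_def using profiles_fun_upd[OF Q i] by blast
  then have Os_S2: "Os \<subseteq> S2 A" and crossO: "crossing Os X Y"
    using range_edges_S2[OF cons] cross unfolding crossing_def by blast+
  have max: "\<forall>W\<in>Os. dominates R (F (Q(i := R))) W" if lin: "linear_order_on A R" for R
    using SPO_SPP_dominates[OF spo spp profiles_fun_upd[OF Q i lin] i] unfolding Os_def by auto
  have dom: "has_dominant_member A Os"
    unfolding has_dominant_member_def Os_def using max unfolding Os_def by blast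
  have lin: "linear_order_on A (Q i)" using profiles_linear[OF Q i] .
  have W1: "F Q \<in> Os" and W2: "F (Q(i := R')) \<in> Os"
    unfolding Os_def using lin lin' by (force intro: image_eqI[where x = "Q i"])+
  obtain x1 y1 where xy1: "x1 \<in> X" "y1 \<in> Y" "F Q = {x1, y1}" using crossO W1 unfolding crossing_def by blast
  obtain x2 y2 where xy2: "x2 \<in> X" "y2 \<in> Y" "F (Q(i := R')) = {x2, y2}"
    using crossO W2 unfolding crossing_def by blast
  note side_max = crossing_dominant_side_max[OF finA Os_S2 dom crossO disj]
  have "(x1, x2) \<in> Q i" using side_max[OF lin W1 _ _ _ W2] max[OF lin] xy1 xy2 by simp
  moreover have "(x2, x1) \<in> Q i"
    using side_max[OF lin' W2 max[OF lin'] _ _ W1] xy1 xy2 agree by blast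
  ultimately have "x1 = x2" using linear_order_onD(4)[OF lin] by blast
  then show ?thesis using xy1 xy2 disj the_elem_pair_Int by (metis disjoint_iff)
qed

lemma crossing_side_independent:
  assumes finV: "finite V" and finA: "finite A" and cons: "consular_rule V A F"
    and spo: "SPO V A F" and spp: "SPP V A F"
    and disj: "X \<inter> Y = {}" and cross: "crossing (range_edges V A F) X Y"
    and P: "P \<in> profiles V A" and P': "P' \<in> profiles V A"
    and agree: "restrict_profile P X = restrict_profile P' X"
  shows "the_elem (F P' \<inter> X) = the_elem (F P \<inter> X)"
proof (rule profiles_voterwise_chain[OF finV P P', where r = "\<lambda>Q1 Q2. the_elem (F Q1 \<inter> X) = the_elem (F Q2 \<inter> X)"])
  fix Q i assume Q: "Q \<in> profiles V A" "i \<in> V" "Q i = P i"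
  have "P i \<inter> X \<times> X = P' i \<inter> X \<times> X"
    using fun_cong[OF agree, of i] unfolding restrict_profile_def by simp
  then have "P' i \<inter> X \<times> X = Q i \<inter> X \<times> X" using Q(3) by simp
  then show "the_elem (F (Q(i := P' i)) \<inter> X) = the_elem (F Q \<inter> X)"
    by (rule crossing_side_fun_upd[OF finA cons spo spp disj cross Q(1,2) profiles_linear[OF P' Q(2)]])
qed (rule refl, erule trans)

lemma crossing_side_choice:
  assumes finV: "finite V" and finA: "finite A" and cons: "consular_rule V A F"
    and spo: "SPO V A F" and spp: "SPP V A F"
    and disj: "X \<inter> Y = {}" and cross: "crossing (range_edges V A F) X Y" and X: "X \<noteq> {}"
  obtains G where "\<forall>Q\<in>profiles V X. G Q \<in> X"
    "\<forall>P\<in>profiles V A. G (restrict_profile P X) = the_elem (F P \<inter> X)"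
proof -
  have in_X: "the_elem (F P \<inter> X) \<in> X" if P: "P \<in> profiles V A" for P
  proof -
    obtain x y where "x \<in> X" "y \<in> Y" "F P = {x, y}"
      by (rule crossing_range_edgesE[OF cross P])
    moreover have "y \<notin> X" using \<open>y \<in> Y\<close> disj by blast
    ultimately show ?thesis using the_elem_pair_Int by simp
  qed
  define lift where "lift Q = (SOME P. P \<in> profiles V A \<and> restrict_profile P X = Q)" for Q
  define G where "G Q = (if \<exists>P\<in>profiles V A. restrict_profile P X = Q
      then the_elem (F (lift Q) \<inter> X) else (SOME x. x \<in> X))" for Q
  have lift: "lift Q \<in> profiles V A \<and> restrict_profile (lift Q) X = Q"
    if "\<exists>P\<in>profiles V A. restrict_profile P X = Q" for Q
  proof -
    have "\<exists>P. P \<in> profiles V A \<and> restrict_profile P X = Q" using that by blast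
    then show ?thesis unfolding lift_def by (rule someI_ex)
  qed
  have "G Q \<in> X" for Q
  proof (cases "\<exists>P\<in>profiles V A. restrict_profile P X = Q")
    case True
    then show ?thesis unfolding G_def using in_X lift by simp
  next
    case False
    then show ?thesis unfolding G_def using X by (simp add: some_in_eq)
  qed
  moreover have "G (restrict_profile P X) = the_elem (F P \<inter> X)" if P: "P \<in> profiles V A" for P
  proof -
    have ex: "\<exists>P'\<in>profiles V A. restrict_profile P' X = restrict_profile P X" using P by blast
    then have "G (restrict_profile P X) = the_elem (F (lift (restrict_profile P X)) \<inter> X)"
      unfolding G_def by simp
    also have "\<dots> = the_elem (F P \<inter> X)"
      using lift[OF ex] crossing_side_independent[OF finV finA cons spo spp disj cross P] by simp
    finally show ?thesis .
  qed
  ultimately show thesis using that by blast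
qed

lemma reducible_if_crossing:
  assumes finV: "finite V" and finA: "finite A" and cons: "consular_rule V A F"
    and spo: "SPO V A F" and spp: "SPP V A F"
    and XY: "X \<union> Y = A" "X \<inter> Y = {}" "X \<noteq> {}" "Y \<noteq> {}"
    and cross: "crossing (range_edges V A F) X Y"
  shows "reducible V A F"
proof -
  have cross': "crossing (range_edges V A F) Y X"
    using cross unfolding crossing_def by (metis insert_commute)
  have YX: "Y \<inter> X = {}" using XY(2) by blast
  obtain G where G: "\<forall>Q\<in>profiles V X. G Q \<in> X"
    "\<forall>P\<in>profiles V A. G (restrict_profile P X) = the_elem (F P \<inter> X)"
    using crossing_side_choice[OF finV finA cons spo spp XY(2) cross XY(3)] .
  obtain H where H: "\<forall>Q\<in>profiles V Y. H Q \<in> Y"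
    "\<forall>P\<in>profiles V A. H (restrict_profile P Y) = the_elem (F P \<inter> Y)"
    using crossing_side_choice[OF finV finA cons spo spp YX cross' XY(4)] .
  have "F P = {G (restrict_profile P X), H (restrict_profile P Y)}" if P: "P \<in> profiles V A" for P
  proof -
    obtain x y where xy: "x \<in> X" "y \<in> Y" "F P = {x, y}"
      by (rule crossing_range_edgesE[OF cross P])
    moreover have "x \<notin> Y" "y \<notin> X" using xy(1,2) XY(2) by blast+
    ultimately show ?thesis using G(2) H(2) P the_elem_pair_Int[of x X y] the_elem_pair_Int[of y Y x]
      by (simp add: insert_commute)
  qed
  then show ?thesis unfolding reducible_def using XY(1,2) G(1) H(1) by blast
qed

theorem fact39:
  fixes V :: "'v set" and A :: "'a set" and F :: "('v \<Rightarrow> 'a rel) \<Rightarrow> 'a set"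
  assumes "finite V" and "V \<noteq> {}" and "finite A"
    and "consular_rule V A F"
    and "irreducible V A F" and "weakly_viable V A F"
    and "SPP V A F" and "SPO V A F"
  shows "\<forall>a\<in>A. \<exists>b c. a \<noteq> b \<and> b \<noteq> c \<and> a \<noteq> c \<and>
           {a, b} \<in> range_edges V A F \<and> {b, c} \<in> range_edges V A F \<and> {a, c} \<in> range_edges V A F"
proof
  fix a assume a: "a \<in> A"
  let ?E = "range_edges V A F" and ?N = "{y. {a, y} \<in> range_edges V A F}"
  have E: "?E \<subseteq> S2 A" using range_edges_S2[OF assms(4)] .
  have edge: "u \<in> A \<and> v \<in> A \<and> u \<noteq> v" if "{u, v} \<in> ?E" for u v
    by (rule S2_pairD[OF subsetD[OF E that]])
  have dom: "has_dominant_member A ?E" using range_edges_has_dominant_member assms by blast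
  obtain z where az: "{a, z} \<in> ?E" using weakly_viable_range_edge[OF assms(4,6) a] .
  have "\<exists>b c. {a, b} \<in> ?E \<and> {b, c} \<in> ?E \<and> {a, c} \<in> ?E"
  proof (rule ccontr)
    assume "\<not> ?thesis"
    then have cross: "crossing ?E (A - ?N) ?N" by (rule crossing_of_no_triangle[OF assms(3) E dom az])
    have "?N \<subseteq> A" "a \<in> A - ?N" "z \<in> ?N" using a az edge edge[of a a] by auto
    then have "(A - ?N) \<union> ?N = A" "(A - ?N) \<inter> ?N = {}" "A - ?N \<noteq> {}" "?N \<noteq> {}" by blast+
    then have "reducible V A F" by (rule reducible_if_crossing[OF assms(1,3,4,8,7) _ _ _ _ cross])
    then show False using assms(5) unfolding irreducible_def by blast
  qed
  then obtain b c where "{a, b} \<in> ?E" "{b, c} \<in> ?E" "{a, c} \<in> ?E" by blast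
  then show "\<exists>b c. a \<noteq> b \<and> b \<noteq> c \<and> a \<noteq> c \<and> {a, b} \<in> ?E \<and> {b, c} \<in> ?E \<and> {a, c} \<in> ?E"
    using edge[of a b] edge[of b c] edge[of a c] by blast
qed

end
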